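(* Let $p\ne 2,5$ be a prime and let $\sum_{i=0}^\infty a_it^i\in\mathbb{C}_p[[t]]$ be a power series with integral coefficients ($v(a_i)\ge 0$ for all $i$). Let $f(t)=\sum_{i=0}^\infty\frac{a_i}{i+1}t^{i+1}$. If $v(a_0)=0$, then $\mathrm{New}_1(f)=\emptyset$ and $\mathrm{New}_{1/2}(f)\subset[1,3]$. If $v(a_1)=0$ or $v(a_2)=0$, then $\mathrm{New}_1(f)\subset[1,3]$ and $\mathrm{New}_{1/2}(f)\subset[1,3]$.
   Context: $\mathbb{C}_p$ is the completion of $\overline{\mathbb{Q}_p}$ with valuation $v$, $v(p)=1$, $v(0)=\infty$. For a positive rational $m$ and a power series $F(t)=\sum_{u\ge0}c_ut^u$, the Newton polygon $\mathrm{New}_m(F)\subset\mathbb{R}$ is the convex hull of the set of $u\in\mathbb{Z}_{\ge0}$ for which there exists $w\in\mathbb{Q}$ with $w\ge m$ such that $v(c_u)+wu=v(c_{u'})+wu'$ for some $u'\ne u$ and $v(c_u)+wu\le v(c_{u''})+wu''$ for all $u''\in\mathbb{Z}_{\ge0}$. *)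

theory Defs
  imports "HOL-Analysis.Analysis"
begin

text \<open>An abstract stand-in for (C_p, v): a field of characteristic 0 with a
  rank-one valuation v into Q \<union> {\<infinity>} (ereal), normalised by v(p) = 1.
  C_p with its valuation is an instance.\<close>
definition p_valuation :: "nat \<Rightarrow> ('a::field_char_0 \<Rightarrow> ereal) \<Rightarrow> bool" where
  "p_valuation p v \<longleftrightarrow>
     (\<forall>x. v x = \<infinity> \<longleftrightarrow> x = 0) \<and>
     (\<forall>x. x \<noteq> 0 \<longrightarrow> (\<exists>r::rat. v x = ereal (real_of_rat r))) \<and>
     (\<forall>x y. v (x * y) = v x + v y) \<and>
     (\<forall>x y. min (v x) (v y) \<le> v (x + y)) \<and>
     v (of_nat p) = 1"

definition newton_polygon :: "('a \<Rightarrow> ereal) \<Rightarrow> rat \<Rightarrow> (nat \<Rightarrow> 'a) \<Rightarrow> real set" where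
  "newton_polygon v m c = convex hull (real ` {u::nat. \<exists>w::rat. w \<ge> m \<and>
      (\<exists>u'. u' \<noteq> u \<and>
         v (c u) + ereal (real_of_rat w * real u) = v (c u') + ereal (real_of_rat w * real u')) \<and>
      (\<forall>u''. v (c u) + ereal (real_of_rat w * real u) \<le> v (c u'') + ereal (real_of_rat w * real u''))})"

definition integrate_coeffs :: "(nat \<Rightarrow> 'a::field) \<Rightarrow> nat \<Rightarrow> 'a" where
  "integrate_coeffs a u = (if u = 0 then 0 else a (u - 1) / of_nat u)"

end

theory Submission imports Defs begin

text \<open>Write \<open>c u = a (u - 1) / u\<close>. Integrality gives \<open>v (c u) \<ge> - v u\<close>, with equality
  when \<open>a (u - 1)\<close> is a unit, and \<open>v u\<close> is the \<open>p\<close>-adic order of \<open>u\<close>, which for odd \<open>p\<close>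
  grows only logarithmically. So for \<open>w \<ge> 1/2\<close> (and \<open>p \<noteq> 5\<close>) the quantity
  \<open>v (c u) + w u\<close> exceeds \<open>3 w\<close> for all \<open>u \<ge> 4\<close>, while a unit among \<open>a 0, a 1, a 2\<close>
  makes it at most \<open>3 w\<close> at some \<open>u \<le> 3\<close>; hence every minimising \<open>u\<close> lies in \<open>[1,3]\<close>.
  If \<open>a 0\<close> is a unit and \<open>w \<ge> 1\<close>, the minimum is attained at \<open>u = 1\<close> only, so no
  \<open>u\<close> qualifies for \<open>New\<^sub>1\<close>.\<close>

context
  fixes p :: nat and v :: "'a::field_char_0 \<Rightarrow> ereal"
  assumes valuation: "p_valuation p v"
begin

lemma valuation_mult: "v (x * y) = v x + v y"
  using valuation by (simp add: p_valuation_def)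

lemma valuation_add_ge: "min (v x) (v y) \<le> v (x + y)"
  using valuation by (simp add: p_valuation_def)

lemma valuation_zero: "v 0 = \<infinity>"
  using valuation by (simp add: p_valuation_def)

lemma valuation_finite: "x \<noteq> 0 \<Longrightarrow> \<exists>r::real. v x = ereal r"
  using valuation unfolding p_valuation_def by blast

lemma valuation_of_nat_p: "v (of_nat p) = 1"
  using valuation by (simp add: p_valuation_def)

lemma valuation_one: "v 1 = 0"
proof -
  obtain r where "v 1 = ereal r" using valuation_finite[of 1] by auto
  with valuation_mult[of 1 1] show ?thesis by simp
qed

lemma valuation_minus: "v (- x) = v x"
proof -
  obtain r where "v (-1) = ereal r" using valuation_finite[of "-1"] by auto
  with valuation_mult[of "-1" "-1"] valuation_one have "v (-1) = 0" by simp
  with valuation_mult[of "-1" x] show ?thesis by simp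
qed

lemma valuation_power: "v (x ^ k) = ereal (real k) * v x"
proof (induction k)
  case 0
  then show ?case by (simp add: valuation_one)
next
  case (Suc k)
  then show ?case
    by (cases "v x") (simp_all add: valuation_mult algebra_simps ereal_distrib)
qed

lemma valuation_of_nat_nonneg: "0 \<le> v (of_nat n)"
proof (induction n)
  case 0
  then show ?case by (simp add: valuation_zero)
next
  case (Suc n)
  with valuation_add_ge[of 1 "of_nat n"] valuation_one show ?case
    by (simp add: min_def split: if_splits)
qed

lemma valuation_of_int_nonneg: "0 \<le> v (of_int z)"
proof (cases "0 \<le> z")
  case True
  then have "(of_int z :: 'a) = of_nat (nat z)" by simp
  then show ?thesis using valuation_of_nat_nonneg by simp
next
  case False
  then have "(of_int z :: 'a) = - of_nat (nat (- z))" by simp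
  then show ?thesis using valuation_of_nat_nonneg valuation_minus by simp
qed

lemma valuation_of_nat_coprime:
  assumes "prime p" "\<not> p dvd m"
  shows "v (of_nat m) = 0"
proof (rule ccontr)
  assume "v (of_nat m) \<noteq> 0"
  then have m_pos: "0 < v (of_nat m)" using valuation_of_nat_nonneg[of m] by simp
  have "coprime (int p) (int m)" using assms by (simp add: prime_imp_coprime)
  then obtain x y where "x * int p + y * int m = 1"
    using bezout_int[of "int p" "int m"] by auto
  then have "of_int x * of_nat p + of_int y * of_nat m = (1::'a)"
    by (metis of_int_1 of_int_add of_int_mult of_int_of_nat_eq)
  then have "min (v (of_int x * of_nat p)) (v (of_int y * of_nat m)) \<le> 0"
    using valuation_add_ge valuation_one by metis
  moreover have "0 < v (of_int x * of_nat p)" "0 < v (of_int y * of_nat m)"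
    using valuation_mult valuation_of_nat_p m_pos valuation_of_int_nonneg
    by (simp_all add: add_nonneg_pos)
  ultimately show False by (auto simp: min_le_iff_disj not_le[symmetric])
qed

lemma valuation_of_nat:
  assumes "prime p" "0 < n"
  shows "v (of_nat n) = ereal (multiplicity p n)"
proof -
  have "\<not> is_unit p" using assms(1) by (simp add: prime_nat_iff)
  then obtain y where n: "n = p ^ multiplicity p n * y" and "\<not> p dvd y"
    using multiplicity_decompose' assms(2) by (metis less_irrefl)
  then have "v (of_nat y) = 0" using valuation_of_nat_coprime assms(1) by blast
  then show ?thesis
    by (subst n) (simp add: valuation_mult valuation_power valuation_of_nat_p)
qed

end

lemma two_mult_plus_one_le_three_power: "2 * k + 1 \<le> (3::nat) ^ k"
  by (induction k) auto

lemma prime_power_multiplicity_le: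
  fixes p u :: nat
  assumes "prime p" "p \<noteq> 2" "0 < u"
  shows "3 ^ multiplicity p u \<le> u"
proof -
  have "3 \<le> p" using assms(1,2) prime_ge_2_nat[of p] by linarith
  then have "3 ^ multiplicity p u \<le> p ^ multiplicity p u" by (rule power_mono) simp
  also have "\<dots> \<le> u" using multiplicity_dvd assms(3) by (rule dvd_imp_le)
  finally show ?thesis .
qed

lemma multiplicity_plus_one_less:
  fixes p u :: nat
  assumes "prime p" "p \<noteq> 2" "2 \<le> u"
  shows "multiplicity p u + 1 < u"
  using prime_power_multiplicity_le[OF assms(1,2), of u] assms(3)
    two_mult_plus_one_le_three_power[of "multiplicity p u"]
  by (cases "multiplicity p u") auto

lemma two_mult_multiplicity_plus_three_less:
  fixes p u :: nat
  assumes "prime p" "p \<noteq> 2" "p \<noteq> 5" "4 \<le> u"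
  shows "2 * multiplicity p u + 3 < u"
proof -
  let ?k = "multiplicity p u"
  have three_pow: "3 ^ ?k \<le> u" using prime_power_multiplicity_le assms by simp
  consider "?k = 0" | "?k = 1" | j where "?k = Suc (Suc j)"
    by (metis One_nat_def not0_implies_Suc)
  then show ?thesis
  proof cases
    case 1
    then show ?thesis using assms(4) by simp
  next
    case 2
    have "p dvd u" using multiplicity_dvd[of p u] 2 by simp
    have "3 \<le> p" "odd p" using assms(1,2) prime_ge_2_nat[of p] prime_odd_nat[of p] by auto
    have "5 < u"
    proof (rule ccontr)
      assume "\<not> 5 < u"
      with \<open>p dvd u\<close> have "p \<le> 5" using dvd_imp_le[of p u] assms(4) by simp
      with \<open>3 \<le> p\<close> \<open>odd p\<close> assms(3) have "p = 3" by presburger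
      moreover have "u = 4 \<or> u = 5" using \<open>\<not> 5 < u\<close> assms(4) by linarith
      ultimately show False using \<open>p dvd u\<close> by auto
    qed
    then show ?thesis using 2 by simp
  next
    case 3
    then show ?thesis
      using three_pow two_mult_plus_one_le_three_power[of "Suc j"] by simp
  qed
qed

text \<open>The intercept with the vertical axis of the line of slope \<open>-w\<close> through
  \<open>(u, v (c u))\<close>; \<open>New\<^sub>m\<close> is spanned by the \<open>u\<close> minimising it, with the minimum
  attained at least twice, for some rational \<open>w \<ge> m\<close>.\<close>
definition tilted_val :: "('a \<Rightarrow> ereal) \<Rightarrow> (nat \<Rightarrow> 'a) \<Rightarrow> real \<Rightarrow> nat \<Rightarrow> ereal" where
  "tilted_val v c w u = v (c u) + ereal (w * real u)"

lemma newton_polygon_subset: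
  fixes S :: "real set"
  assumes "convex S"
    and "\<And>w u. real_of_rat m \<le> w \<Longrightarrow> (\<And>u'. tilted_val v c w u \<le> tilted_val v c w u')
           \<Longrightarrow> real u \<in> S"
  shows "newton_polygon v m c \<subseteq> S"
  unfolding newton_polygon_def
proof (rule hull_minimal[where S = convex, OF image_subsetI assms(1)])
  fix u
  assume "u \<in> {u. \<exists>w\<ge>m. (\<exists>u'. u' \<noteq> u \<and>
      v (c u) + ereal (real_of_rat w * real u) = v (c u') + ereal (real_of_rat w * real u')) \<and>
      (\<forall>u''. v (c u) + ereal (real_of_rat w * real u) \<le> v (c u'') + ereal (real_of_rat w * real u''))}"
  then obtain w where "m \<le> w"
    and "\<And>u'. tilted_val v c (real_of_rat w) u \<le> tilted_val v c (real_of_rat w) u'"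
    unfolding tilted_val_def by blast
  then show "real u \<in> S" using assms(2) of_rat_less_eq by blast
qed

lemma newton_polygon_eq_empty:
  assumes "\<And>w. real_of_rat m \<le> w \<Longrightarrow>
    \<exists>r. \<forall>u. u \<noteq> r \<longrightarrow> tilted_val v c w r < tilted_val v c w u"
  shows "newton_polygon v m c = {}"
proof -
  have False if "m \<le> w" and "u' \<noteq> u"
    and "tilted_val v c (real_of_rat w) u = tilted_val v c (real_of_rat w) u'"
    and "\<forall>u''. tilted_val v c (real_of_rat w) u \<le> tilted_val v c (real_of_rat w) u''" for w u u'
  proof -
    obtain r where
      "\<forall>u. u \<noteq> r \<longrightarrow> tilted_val v c (real_of_rat w) r < tilted_val v c (real_of_rat w) u"
      using assms \<open>m \<le> w\<close> of_rat_less_eq by blast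
    with that show False by (cases "u = r") (metis order.strict_iff_not, metis not_le)
  qed
  then have "{u. \<exists>w\<ge>m. (\<exists>u'. u' \<noteq> u \<and>
      v (c u) + ereal (real_of_rat w * real u) = v (c u') + ereal (real_of_rat w * real u')) \<and>
      (\<forall>u''. v (c u) + ereal (real_of_rat w * real u) \<le> v (c u'') + ereal (real_of_rat w * real u''))} = {}"
    unfolding tilted_val_def by blast
  then show ?thesis unfolding newton_polygon_def by simp
qed

context
  fixes p :: nat and v :: "'a::field_char_0 \<Rightarrow> ereal" and a :: "nat \<Rightarrow> 'a"
  assumes valuation: "p_valuation p v" and prime: "prime p"
    and integral: "\<forall>i. 0 \<le> v (a i)"
begin

lemma tilted_val_integrate_coeffs_0: "tilted_val v (integrate_coeffs a) w 0 = \<infinity>"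
  by (simp add: tilted_val_def integrate_coeffs_def valuation_zero[OF valuation])

lemma valuation_integrate_coeffs:
  assumes "0 < u"
  shows "v (a (u - 1)) = v (integrate_coeffs a u) + ereal (multiplicity p u)"
proof -
  have "a (u - 1) = integrate_coeffs a u * of_nat u"
    using assms by (simp add: integrate_coeffs_def)
  then show ?thesis
    using valuation_mult[OF valuation] valuation_of_nat[OF valuation prime assms] by simp
qed

lemma tilted_val_integrate_coeffs_ge:
  assumes "0 < u"
  shows "ereal (w * real u - multiplicity p u) \<le> tilted_val v (integrate_coeffs a) w u"
proof -
  have "0 \<le> v (integrate_coeffs a u) + ereal (multiplicity p u)"
    using valuation_integrate_coeffs[OF assms] integral by (metis (no_types))
  then have "ereal (- multiplicity p u) \<le> v (integrate_coeffs a u)"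
    by (cases "v (integrate_coeffs a u)") auto
  then have "ereal (- multiplicity p u) + ereal (w * real u)
      \<le> tilted_val v (integrate_coeffs a) w u"
    unfolding tilted_val_def by (rule add_right_mono)
  then show ?thesis by simp
qed

lemma tilted_val_integrate_coeffs_unit:
  assumes "0 < u" "v (a (u - 1)) = 0"
  shows "tilted_val v (integrate_coeffs a) w u = ereal (w * real u - multiplicity p u)"
proof -
  have "v (integrate_coeffs a u) = ereal (- multiplicity p u)"
    using valuation_integrate_coeffs[OF assms(1)] assms(2)
    by (cases "v (integrate_coeffs a u)") auto
  then show ?thesis by (simp add: tilted_val_def)
qed

lemma newton_polygon_integrate_coeffs_eq_empty:
  assumes "p \<noteq> 2" "1 \<le> m" "v (a 0) = 0"
  shows "newton_polygon v m (integrate_coeffs a) = {}"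
proof (rule newton_polygon_eq_empty)
  fix w :: real
  assume "real_of_rat m \<le> w"
  moreover have "1 \<le> real_of_rat m" using assms(2) by (metis of_rat_1 of_rat_less_eq)
  ultimately have w: "1 \<le> w" by linarith
  have at_1: "tilted_val v (integrate_coeffs a) w 1 = ereal w"
    using tilted_val_integrate_coeffs_unit[of 1 w] assms(3) by simp
  have "ereal w < tilted_val v (integrate_coeffs a) w u" if "u \<noteq> 1" for u
  proof (cases "u = 0")
    case True
    then show ?thesis by (simp add: tilted_val_integrate_coeffs_0)
  next
    case False
    with that have "multiplicity p u + 1 < u"
      using multiplicity_plus_one_less prime assms(1) by simp
    moreover have "real u - 1 \<le> w * (real u - 1)"
      using w False by (simp add: mult_le_cancel_right1)
    ultimately have "ereal w < ereal (w * real u - multiplicity p u)"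
      by (simp add: algebra_simps)
    also have "\<dots> \<le> tilted_val v (integrate_coeffs a) w u"
      using tilted_val_integrate_coeffs_ge False by simp
    finally show ?thesis .
  qed
  with at_1 show "\<exists>r. \<forall>u. u \<noteq> r \<longrightarrow>
      tilted_val v (integrate_coeffs a) w r < tilted_val v (integrate_coeffs a) w u"
    by metis
qed

lemma newton_polygon_integrate_coeffs_subset:
  assumes "p \<noteq> 2" "p \<noteq> 5" "1/2 \<le> m" "r \<in> {1, 2, 3}" "v (a (r - 1)) = 0"
  shows "newton_polygon v m (integrate_coeffs a) \<subseteq> {1..3}"
proof (rule newton_polygon_subset)
  fix w :: real and u
  assume "real_of_rat m \<le> w"
    and minimal: "\<And>u'. tilted_val v (integrate_coeffs a) w u
                          \<le> tilted_val v (integrate_coeffs a) w u'"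
  moreover have "1/2 \<le> real_of_rat m"
    using assms(3) by (metis of_rat_less_eq of_rat_1 of_rat_divide of_rat_numeral_eq)
  ultimately have w: "1/2 \<le> w" by linarith
  have "tilted_val v (integrate_coeffs a) w r = ereal (w * real r - multiplicity p r)"
    using tilted_val_integrate_coeffs_unit assms(4,5) by auto
  also have "\<dots> \<le> ereal (3 * w)"
    using assms(4) w by auto
  finally have bound: "tilted_val v (integrate_coeffs a) w u \<le> ereal (3 * w)"
    using minimal order_trans by blast
  have "u \<noteq> 0"
  proof
    assume "u = 0"
    with bound show False by (simp add: tilted_val_integrate_coeffs_0)
  qed
  moreover have "\<not> 4 \<le> u"
  proof
    assume "4 \<le> u"
    then have "real (2 * multiplicity p u + 3) < real u"
      using two_mult_multiplicity_plus_three_less[OF prime assms(1,2)] of_nat_less_iff by blast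
    moreover have "1/2 * (real u - 3) \<le> w * (real u - 3)"
      using mult_right_mono[OF w, of "real u - 3"] \<open>4 \<le> u\<close> by simp
    ultimately have "ereal (3 * w) < ereal (w * real u - multiplicity p u)"
      unfolding right_diff_distrib by simp
    also have "\<dots> \<le> tilted_val v (integrate_coeffs a) w u"
      using tilted_val_integrate_coeffs_ge \<open>4 \<le> u\<close> by simp
    finally show False using bound by simp
  qed
  ultimately show "real u \<in> {1..3}" by auto
qed (rule convex_real_interval)

end

theorem lemma6p2:
  fixes p :: nat and v :: "'a::field_char_0 \<Rightarrow> ereal" and a :: "nat \<Rightarrow> 'a"
  assumes "prime p" and "p \<noteq> 2" and "p \<noteq> 5"
    and "p_valuation p v"
    and "\<forall>i. v (a i) \<ge> 0"
  shows "(v (a 0) = 0 \<longrightarrow>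
            newton_polygon v 1 (integrate_coeffs a) = {} \<and>
            newton_polygon v (1/2) (integrate_coeffs a) \<subseteq> {1..3})
       \<and> ((v (a 1) = 0 \<or> v (a 2) = 0) \<longrightarrow>
            newton_polygon v 1 (integrate_coeffs a) \<subseteq> {1..3} \<and>
            newton_polygon v (1/2) (integrate_coeffs a) \<subseteq> {1..3})"
proof -
  note empty = newton_polygon_integrate_coeffs_eq_empty[OF assms(4,1,5) assms(2)]
  note subset = newton_polygon_integrate_coeffs_subset[OF assms(4,1,5) assms(2,3)]
  have "newton_polygon v m (integrate_coeffs a) \<subseteq> {1..3}"
    if "1/2 \<le> m" and "v (a 1) = 0 \<or> v (a 2) = 0" for m
    using that subset[of m 2] subset[of m 3] by auto
  then show ?thesis
    using empty[of 1] subset[of "1/2" 1] by simp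
qed

end
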